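(* For each $\varepsilon>0$, $X_\infty\setminus Y_\infty\subset Z(\varepsilon)$, where $$X_\infty=\Big\{x:\liminf_{n\to\infty}\frac1n\sum_{i=1}^n\log_2d(T^ix,x)=-\infty\Big\},\quad Y_\infty=\Big\{x:\liminf_{n\to\infty}\frac1n\log_2d(T^nx,x)=-\infty\Big\},$$ $$Z(\varepsilon)=\bigcap_{N=1}^\infty\bigcup_{n=N}^\infty\bigcup_{m=1}^\infty\bigcup_{(\mathbf i,\mathbf j)\in\mathcal F^{n,m}(\varepsilon)}\widehat Q_{\mathbf i}^{\mathbf j}.$$
   Context: $\mathbb T=\mathbb R/\mathbb Z$, $Tx=2x\bmod1$, $d$ the usual distance on $\mathbb T$, $\log_20=-\infty$. $\mathcal D_n$ is the set of dyadic intervals $[m/2^n,(m+1)/2^n)$. For $i,j\ge1$, $Q_i^j=\{x:d(T^ix,x)\le2^{-j}\}$ and $\widehat Q_i^j$ is the union of intervals in $\mathcal D_{i+j}$ meeting $Q_i^j$; for $\mathbf i=(i_1,\dots,i_k)$, $\mathbf j=(j_1,\dots,j_k)$, $\widehat Q_{\mathbf i}^{\mathbf j}=\bigcap_{\nu=1}^k\widehat Q_{i_\nu}^{j_\nu}$. $\mathcal F_k(\varepsilon)$ is the set of $(i_1\cdots i_k;j_1\cdots j_k)$ of positive integers, $i_1<\dots<i_k$, with (i) $i_{l+1}-i_l\ge j_l$ for $1\le l<k$, (ii) $k\le\varepsilon i_k$, (iii) $i_k-\sum_{1\le l<k}j_l\le\varepsilon i_k$; $\mathcal F^{n,m}(\varepsilon)=\bigcup_{k=1}^n\{$elements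 of $\mathcal F_k(\varepsilon)$ with $i_k=n$, $j_k=m\}$. *)

theory Defs
  imports "HOL-Analysis.Analysis"
begin

text \<open>The circle T = R/Z is represented by the fundamental domain [0,1).\<close>

definition torus :: "real set" where
  "torus = {0..<1}"

definition dbl :: "real \<Rightarrow> real" where
  "dbl x = frac (2 * x)"

definition tdist :: "real \<Rightarrow> real \<Rightarrow> real" where
  "tdist x y = min (frac (x - y)) (1 - frac (x - y))"

definition elog2 :: "real \<Rightarrow> ereal" where
  "elog2 r = (if r = 0 then -\<infinity> else ereal (log 2 r))"

definition X_inf :: "real set" where
  "X_inf = {x \<in> torus.
     liminf (\<lambda>n::nat. ereal (1 / real n) * (\<Sum>i=1..n. elog2 (tdist ((dbl ^^ i) x) x))) = -\<infinity>}"

definition Y_inf :: "real set" where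
  "Y_inf = {x \<in> torus.
     liminf (\<lambda>n::nat. ereal (1 / real n) * elog2 (tdist ((dbl ^^ n) x) x)) = -\<infinity>}"

definition dyadic :: "nat \<Rightarrow> nat \<Rightarrow> real set" where
  "dyadic n m = {real m / 2 ^ n ..< (real m + 1) / 2 ^ n}"

definition Q :: "nat \<Rightarrow> nat \<Rightarrow> real set" where
  "Q i j = {x \<in> torus. tdist ((dbl ^^ i) x) x \<le> 1 / 2 ^ j}"

definition Qhat :: "nat \<Rightarrow> nat \<Rightarrow> real set" where
  "Qhat i j = \<Union> {dyadic (i + j) m | m. m < 2 ^ (i + j) \<and> dyadic (i + j) m \<inter> Q i j \<noteq> {}}"

text \<open>Multi-index version; the tuples (i_1..i_k) and (j_1..j_k) are lists of equal length k.\<close>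
definition Qhat_multi :: "nat list \<Rightarrow> nat list \<Rightarrow> real set" where
  "Qhat_multi is js = torus \<inter> (\<Inter>\<nu>\<in>{..<length is}. Qhat (is ! \<nu>) (js ! \<nu>))"

text \<open>F_k(eps), with 0-based list indices: position l corresponds to index l+1 of the paper.\<close>
definition F :: "nat \<Rightarrow> real \<Rightarrow> (nat list \<times> nat list) set" where
  "F k eps = {(is, js). length is = k \<and> length js = k \<and> k \<ge> 1 \<and>
     (\<forall>l<k. is ! l \<ge> 1 \<and> js ! l \<ge> 1) \<and>
     (\<forall>l. l + 1 < k \<longrightarrow> is ! l < is ! (l + 1)) \<and>
     (\<forall>l. l + 1 < k \<longrightarrow> is ! (l + 1) - is ! l \<ge> js ! l) \<and>
     real k \<le> eps * real (is ! (k - 1)) \<and>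
     real (is ! (k - 1)) - real (\<Sum>l<k - 1. js ! l) \<le> eps * real (is ! (k - 1))}"

definition Fnm :: "nat \<Rightarrow> nat \<Rightarrow> real \<Rightarrow> (nat list \<times> nat list) set" where
  "Fnm n m eps = (\<Union>k\<in>{1..n}. {(is, js) \<in> F k eps. is ! (k - 1) = n \<and> js ! (k - 1) = m})"

definition Z :: "real \<Rightarrow> real set" where
  "Z eps = (\<Inter>N\<in>{1..}. \<Union>n\<in>{N..}. \<Union>m\<in>{1..}. \<Union>(is, js)\<in>Fnm n m eps. Qhat_multi is js)"

end

theory Submission
  imports Defs
begin

text \<open>Write e(t) = d(T^t x, x). The doubling map gives |e(i+s) - e(s)| <= 2^s e(i), and
  x outside Y_inf gives e(w) >= 2^(-C w). Say that t covers u when e(t) <= 2^(-(u-t)), that is,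
  x lies in Q_t^(u-t). Since i covers about -log_2 e(i) successors, it suffices to show that the
  number W(n) of covering pairs t < u <= n grows linearly.

  Passing repeatedly from n to its leftmost cover gives a chain n = g_0 > g_1 > ... . For
  q >= 1/eps, a chain that reaches n/q in fewer than n/q steps is an element of F^(n,1)(eps) whose
  Q-hat set contains x; so for x outside Z(eps) all chains are long. The shift inequality makes
  covering self-similar (if s < t both cover u, then t - s covers u - s - 1), so W(n) is at most
  the sum of W over the gaps of the chain plus O(n). A long chain has many short gaps, and
  induction gives W(n) = O(n); hence the averages of log_2 e(i) are bounded below and x is not
  in X_inf.\<close>

section \<open>Distance on the circle\<close>

lemma tdist_le_int: "tdist x y \<le> \<bar>x - y - of_int k\<bar>"
proof -
  have fr: "frac (x - y) = x - y - of_int \<lfloor>x - y\<rfloor>" by (simp add: frac_def)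
  show ?thesis
  proof (cases "k \<le> \<lfloor>x - y\<rfloor>")
    case True
    then have "frac (x - y) \<le> \<bar>x - y - of_int k\<bar>" using fr of_int_floor_le[of "x - y"] by linarith
    then show ?thesis unfolding tdist_def by linarith
  next
    case False
    then have "1 - frac (x - y) \<le> \<bar>x - y - of_int k\<bar>"
      using fr real_of_int_floor_add_one_gt[of "x - y"] by linarith
    then show ?thesis unfolding tdist_def by linarith
  qed
qed

lemma tdist_attained: "\<exists>k. tdist x y = \<bar>x - y - of_int k\<bar>"
proof (cases "frac (x - y) \<le> 1 - frac (x - y)")
  case True
  then have "tdist x y = \<bar>x - y - of_int \<lfloor>x - y\<rfloor>\<bar>"
    unfolding tdist_def by (simp add: frac_def)
  then show ?thesis by blast
next
  case False
  then have "tdist x y = \<bar>x - y - of_int (\<lfloor>x - y\<rfloor> + 1)\<bar>"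
    using frac_lt_1[of "x - y"] unfolding tdist_def by (simp add: frac_def)
  then show ?thesis by blast
qed

lemma tdist_nonneg: "0 \<le> tdist x y"
  unfolding tdist_def using frac_lt_1[of "x - y"] by simp

lemma tdist_le_half: "tdist x y \<le> 1/2"
  unfolding tdist_def by linarith

lemma tdist_commute: "tdist x y = tdist y x"
proof -
  have le: "tdist a b \<le> tdist b a" for a b
  proof -
    obtain k where "tdist b a = \<bar>b - a - of_int k\<bar>" using tdist_attained by blast
    moreover have "tdist a b \<le> \<bar>a - b - of_int (- k)\<bar>" by (rule tdist_le_int)
    ultimately show ?thesis by simp
  qed
  show ?thesis using le[of x y] le[of y x] by simp
qed

lemma tdist_triangle: "tdist x z \<le> tdist x y + tdist y z"
proof -
  obtain k1 where k1: "tdist x y = \<bar>x - y - of_int k1\<bar>" using tdist_attained by blast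
  obtain k2 where k2: "tdist y z = \<bar>y - z - of_int k2\<bar>" using tdist_attained by blast
  have "tdist x z \<le> \<bar>(x - y - of_int k1) + (y - z - of_int k2)\<bar>"
    using tdist_le_int[of x z "k1 + k2"] by (simp add: algebra_simps)
  then show ?thesis unfolding k1 k2 by linarith
qed

lemma tdist_dbl_le: "tdist (dbl x) (dbl y) \<le> 2 * tdist x y"
proof -
  obtain k where k: "tdist x y = \<bar>x - y - of_int k\<bar>" using tdist_attained by blast
  have "dbl x - dbl y - of_int (2 * k - \<lfloor>2 * x\<rfloor> + \<lfloor>2 * y\<rfloor>) = 2 * (x - y - of_int k)"
    unfolding dbl_def frac_def by simp
  then have "tdist (dbl x) (dbl y) \<le> \<bar>2 * (x - y - of_int k)\<bar>"
    by (metis tdist_le_int)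
  then show ?thesis unfolding k by (simp only: abs_mult abs_numeral)
qed

lemma tdist_funpow_dbl_le: "tdist ((dbl ^^ s) x) ((dbl ^^ s) y) \<le> 2 ^ s * tdist x y"
proof (induction s)
  case (Suc s)
  have "tdist ((dbl ^^ Suc s) x) ((dbl ^^ Suc s) y) \<le> 2 * tdist ((dbl ^^ s) x) ((dbl ^^ s) y)"
    by (simp add: tdist_dbl_le)
  also have "\<dots> \<le> 2 * (2 ^ s * tdist x y)" using Suc by simp
  finally show ?case by simp
qed simp

lemma tdist_eq_0_imp_eq:
  assumes "x \<in> torus" "y \<in> torus" "tdist x y = 0"
  shows "x = y"
proof -
  obtain k where "x - y = of_int k" using tdist_attained[of x y] assms(3) by auto
  moreover have "\<bar>x - y\<bar> < 1" using assms(1,2) unfolding torus_def by auto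
  ultimately have "k = 0" by linarith
  with \<open>x - y = of_int k\<close> show ?thesis by simp
qed

lemma dbl_in_torus: "dbl x \<in> torus"
  unfolding dbl_def torus_def by (simp add: frac_lt_1)

section \<open>Covers and chains of leftmost covers\<close>

lemma sum_lessThan_telescope_nat:
  fixes g :: "nat \<Rightarrow> nat"
  assumes "\<And>r. r < R \<Longrightarrow> g (Suc r) \<le> g r"
  shows "(\<Sum>r<R. g r - g (Suc r)) = g 0 - g R"
proof -
  have "int (\<Sum>r<R. g r - g (Suc r)) = (\<Sum>r<R. int (g r) - int (g (Suc r)))"
    using assms by (auto simp: of_nat_diff intro!: sum.cong)
  also have "\<dots> = int (g 0) - int (g R)" by (rule sum_lessThan_telescope')
  finally show ?thesis by linarith
qed

locale return_profile =
  fixes e :: "nat \<Rightarrow> real" and C :: nat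
  assumes le_half: "e t \<le> 1/2"
    and shift_le: "\<bar>e (i + s) - e s\<bar> \<le> 2 ^ s * e i"
    and exp_lower_bound: "1 \<le> w \<Longrightarrow> 1 / 2 ^ (C * w) \<le> e w"
begin

lemma e_pos: "1 \<le> i \<Longrightarrow> 0 < e i"
  by (rule less_le_trans[OF _ exp_lower_bound]) simp_all

text \<open>For the return distances of a point \<open>x\<close>, \<open>covers t u\<close> says \<open>x \<in> Q\<^sub>t\<^sup>u\<^sup>-\<^sup>t\<close>.\<close>

definition covers :: "nat \<Rightarrow> nat \<Rightarrow> bool" where
  "covers t u \<longleftrightarrow> e t \<le> 1 / 2 ^ (u - t)"

lemma covers_if_le_Suc: "u \<le> Suc t \<Longrightarrow> covers t u"
  using le_half[of t] by (auto simp: covers_def le_Suc_eq Suc_diff_le)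

lemma covers_mono: "covers t u \<Longrightarrow> u' \<le> u \<Longrightarrow> covers t u'"
  unfolding covers_def by (smt (verit) diff_le_mono frac_le power_increasing one_le_numeral zero_less_power)

lemma covers_diff:
  assumes "covers s u" "covers t u" "s < t" "t \<le> u"
  shows "covers (t - s) (u - s - 1)"
proof (cases "u \<le> Suc t")
  case True
  then show ?thesis by (intro covers_if_le_Suc) linarith
next
  case False
  have split_exp: "(2::real) ^ (u - s) = 2 ^ (t - s) * 2 ^ (u - t)"
    using assms(3,4) by (simp flip: power_add)
  have "e (t - s) \<le> e t + 2 ^ (t - s) * e s"
    using shift_le[of s "t - s"] assms(3) by (simp add: abs_le_iff)
  also have "\<dots> \<le> 1 / 2 ^ (u - t) + 2 ^ (t - s) * (1 / 2 ^ (u - s))"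
    using assms(1,2) unfolding covers_def by (intro add_mono mult_left_mono) auto
  also have "\<dots> = 2 / 2 ^ (u - t)" unfolding split_exp by simp
  also have "\<dots> = 1 / 2 ^ (u - t - 1)"
    using False by (simp add: power_eq_if)
  finally show ?thesis
    unfolding covers_def using assms(3,4) by (simp add: diff_diff_add)
qed

lemma covers_lag_le:
  assumes "1 \<le> w" "covers w (w + j)"
  shows "j \<le> C * w"
proof -
  have "1 / 2 ^ (C * w) \<le> (1::real) / 2 ^ j"
    using exp_lower_bound[OF assms(1)] assms(2) unfolding covers_def by simp
  then have "(2::real) ^ j \<le> 2 ^ (C * w)" by (simp add: frac_le field_simps)
  then show ?thesis by simp
qed

definition first_cover :: "nat \<Rightarrow> nat" where
  "first_cover u = (LEAST t. 1 \<le> t \<and> covers t u)"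

lemma first_cover_witness: "1 \<le> max 1 (u - 1) \<and> covers (max 1 (u - 1)) u"
  by (auto intro: covers_if_le_Suc)

lemma first_cover_ge_1: "1 \<le> first_cover u"
  and covers_first_cover: "covers (first_cover u) u"
  using LeastI[of "\<lambda>t. 1 \<le> t \<and> covers t u", OF first_cover_witness]
  unfolding first_cover_def by auto

lemma first_cover_le: "1 \<le> t \<Longrightarrow> covers t u \<Longrightarrow> first_cover u \<le> t"
  unfolding first_cover_def by (rule Least_le) simp

lemma first_cover_le_max: "first_cover u \<le> max 1 (u - 1)"
  using first_cover_le first_cover_witness by blast

lemma first_cover_less: "2 \<le> u \<Longrightarrow> first_cover u < u"
  using first_cover_le_max[of u] by auto

definition cover_count :: "nat \<Rightarrow> nat" where
  "cover_count u = card {t. 1 \<le> t \<and> t < u \<and> covers t u}"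

definition cover_total :: "nat \<Rightarrow> nat" where
  "cover_total n = (\<Sum>u\<le>n. cover_count u)"

definition back_lags :: "nat \<Rightarrow> nat set" where
  "back_lags m = {w. 1 \<le> w \<and> w < m \<and> covers (m - w) m}"

definition back_weight :: "nat \<Rightarrow> nat" where
  "back_weight m = (\<Sum>w\<in>back_lags m. C * w + 1)"

lemma cover_count_le: "cover_count u \<le> u"
proof -
  have "cover_count u \<le> card {1..<u}"
    unfolding cover_count_def by (intro card_mono) auto
  then show ?thesis by simp
qed

lemma cover_total_le: "cover_total n \<le> (n + 1) * n"
proof -
  have "cover_total n \<le> (\<Sum>u\<le>n. n)"
    unfolding cover_total_def by (intro sum_mono) (use cover_count_le order_trans in auto)
  then show ?thesis by simp
qed

lemma cover_total_eq_card:
  "cover_total n = card (SIGMA u:{..n}. {t. 1 \<le> t \<and> t < u \<and> covers t u})"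
  unfolding cover_total_def cover_count_def by (subst card_SigmaI) auto

lemma back_lags_subset: "back_lags m \<subseteq> {1..<m}"
  unfolding back_lags_def by auto

lemma finite_back_lags: "finite (back_lags m)"
  using back_lags_subset finite_subset by blast

lemma back_weight_le: "back_weight m \<le> m * (C * m + 1)"
proof -
  have "back_weight m \<le> (\<Sum>w\<in>back_lags m. C * m + 1)"
    unfolding back_weight_def by (intro sum_mono) (auto simp: back_lags_def)
  also have "\<dots> = card (back_lags m) * (C * m + 1)" by simp
  also have "\<dots> \<le> m * (C * m + 1)"
    using card_mono[OF _ back_lags_subset, of m] by (intro mult_le_mono1) simp
  finally show ?thesis .
qed

lemma cover_count_split:
  assumes "covers T u" "T < u"
  shows "cover_count u \<le> card {t. 1 \<le> t \<and> t < T \<and> covers t u} + 2 + cover_count (u - T - 1)"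
proof -
  define v where "v = u - T - 1"
  define below where "below = {t. 1 \<le> t \<and> t < T \<and> covers t u}"
  define above where "above = {s. 1 \<le> s \<and> s < v \<and> covers s v} \<union> {v}"
  have "{t. 1 \<le> t \<and> t < u \<and> covers t u} \<subseteq> below \<union> {T} \<union> (\<lambda>s. s + T) ` above"
  proof
    fix t assume t: "t \<in> {t. 1 \<le> t \<and> t < u \<and> covers t u}"
    consider "t < T" | "t = T" | "T < t" by linarith
    then show "t \<in> below \<union> {T} \<union> (\<lambda>s. s + T) ` above"
    proof cases
      case 3
      have "covers (t - T) v"
        unfolding v_def using covers_diff[OF assms(1) _ 3] t by auto
      moreover have "t - T \<le> v" using t unfolding v_def by auto
      ultimately have "t - T \<in> above" using 3 unfolding above_def by auto
      moreover have "t = (t - T) + T" using 3 by simp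
      ultimately show ?thesis by blast
    qed (use t in \<open>auto simp: below_def\<close>)
  qed
  then have "cover_count u \<le> card (below \<union> {T} \<union> (\<lambda>s. s + T) ` above)"
    unfolding cover_count_def below_def above_def by (intro card_mono) auto
  also have "\<dots> \<le> card below + card {T} + card ((\<lambda>s. s + T) ` above)"
    by (meson card_Un_le le_trans add_le_mono order_refl)
  also have "card ((\<lambda>s. s + T) ` above) \<le> card above"
    by (rule card_image_le) (simp add: above_def)
  also have "card above \<le> cover_count v + 1"
    unfolding above_def cover_count_def using card_Un_le by fastforce
  finally show ?thesis unfolding below_def v_def by simp
qed

text \<open>A cover \<open>t < T\<close> of some \<open>u \<in> (T, n]\<close> also covers \<open>T\<close>, and by \<open>covers_diff\<close> its lag
  \<open>T - t\<close> covers \<open>u - t - 1\<close>, which bounds \<open>u - T\<close> by \<open>C (T - t) + 1\<close>.\<close>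

lemma crossing_covers_le_back_weight:
  assumes "covers T n"
  shows "(\<Sum>u\<in>{T<..n}. card {t. 1 \<le> t \<and> t < T \<and> covers t u}) \<le> back_weight T"
proof -
  define pairs where "pairs = (SIGMA u:{T<..n}. {t. 1 \<le> t \<and> t < T \<and> covers t u})"
  have "(\<Sum>u\<in>{T<..n}. card {t. 1 \<le> t \<and> t < T \<and> covers t u}) = card pairs"
    unfolding pairs_def by (rule card_SigmaI[symmetric]) auto
  also have "\<dots> \<le> card (SIGMA w:back_lags T. {1..C * w + 1})"
  proof (rule card_inj_on_le[where f = "\<lambda>(u, t). (T - t, u - T)"])
    show "inj_on (\<lambda>(u, t). (T - t, u - T)) pairs"
      by (auto simp: inj_on_def pairs_def)
    show "finite (SIGMA w:back_lags T. {1..C * w + 1})"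
      using finite_back_lags by auto
    show "(\<lambda>(u, t). (T - t, u - T)) ` pairs \<subseteq> (SIGMA w:back_lags T. {1..C * w + 1})"
    proof (rule image_subsetI)
      fix p assume "p \<in> pairs"
      then obtain u t where p: "p = (u, t)" and u: "T < u" "u \<le> n"
        and t: "1 \<le> t" "t < T" "covers t u"
        unfolding pairs_def by auto
      have lag: "T - t \<in> back_lags T"
        using t covers_mono[OF t(3)] u unfolding back_lags_def by auto
      have "u - t - 1 = (T - t) + (u - T - 1)" using t u by arith
      then have "covers (T - t) ((T - t) + (u - T - 1))"
        using covers_diff[OF t(3) covers_mono[OF assms u(2)] t(2)] u by simp
      then have "u - T \<le> C * (T - t) + 1"
        using covers_lag_le[of "T - t" "u - T - 1"] t by linarith
      then show "(\<lambda>(u, t). (T - t, u - T)) p \<in> (SIGMA w:back_lags T. {1..C * w + 1})"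
        using lag u p by simp
    qed
  qed
  also have "\<dots> = back_weight T"
    unfolding back_weight_def by (subst card_SigmaI) (auto simp: finite_back_lags)
  finally show ?thesis .
qed

lemma cover_total_split:
  assumes "2 \<le> n"
  defines "T \<equiv> first_cover n"
  shows "cover_total n \<le> cover_total T + cover_total (n - T) + 2 * (n - T) + back_weight T"
proof -
  have "T < n" unfolding T_def using first_cover_less assms by blast
  have covers_T: "covers T u" if "u \<le> n" for u
    using covers_mono[OF covers_first_cover that] unfolding T_def .
  have "cover_total n = cover_total T + (\<Sum>u\<in>{T<..n}. cover_count u)"
  proof -
    have "{..n} = {..T} \<union> {T<..n}" "{..T} \<inter> {T<..n} = {}" using \<open>T < n\<close> by auto
    then show ?thesis unfolding cover_total_def by (simp add: sum.union_disjoint)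
  qed
  also have "(\<Sum>u\<in>{T<..n}. cover_count u) \<le> (\<Sum>u\<in>{T<..n}.
      card {t. 1 \<le> t \<and> t < T \<and> covers t u} + 2 + cover_count (u - T - 1))"
    by (intro sum_mono cover_count_split covers_T) auto
  also have "\<dots> = (\<Sum>u\<in>{T<..n}. card {t. 1 \<le> t \<and> t < T \<and> covers t u}) + 2 * (n - T)
      + (\<Sum>u\<in>{T<..n}. cover_count (u - T - 1))"
    by (simp only: sum.distrib) simp
  also have "(\<Sum>u\<in>{T<..n}. cover_count (u - T - 1)) = (\<Sum>v<n - T. cover_count v)"
    by (rule sum.reindex_bij_witness[of _ "\<lambda>v. v + T + 1" "\<lambda>u. u - T - 1"]) auto
  also have "\<dots> \<le> cover_total (n - T)"
    unfolding cover_total_def by (intro sum_mono2) auto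
  finally show ?thesis
    using crossing_covers_le_back_weight[OF covers_T[OF order_refl]] by linarith
qed

lemma back_lags_rec:
  assumes "2 \<le> m"
  defines "T \<equiv> first_cover m"
  shows "back_lags m \<subseteq> {1, m - T} \<union> Suc ` back_lags (m - T - 1)"
proof
  fix w assume w: "w \<in> back_lags m"
  then have w1: "1 \<le> w" "w < m" "covers (m - w) m" unfolding back_lags_def by auto
  have "T \<le> m - w" unfolding T_def using first_cover_le w1 by auto
  show "w \<in> {1, m - T} \<union> Suc ` back_lags (m - T - 1)"
  proof (cases "w = 1 \<or> w = m - T")
    case False
    then have w2: "2 \<le> w" "w < m - T" using w1 \<open>T \<le> m - w\<close> by auto
    have "covers ((m - w) - T) (m - T - 1)"
      by (rule covers_diff) (use w1 w2 covers_first_cover in \<open>auto simp: T_def\<close>)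
    moreover have "(m - w) - T = (m - T - 1) - (w - 1)" using w2 by arith
    ultimately have "w - 1 \<in> back_lags (m - T - 1)" unfolding back_lags_def using w2 by auto
    moreover have "w = Suc (w - 1)" using w2 by simp
    ultimately show ?thesis by blast
  qed auto
qed

lemma back_weight_rec:
  assumes "2 \<le> m"
  defines "h \<equiv> m - first_cover m"
  shows "back_weight m \<le> back_weight (h - 1) + 2 * C * h + 2"
proof -
  have "1 \<le> h" unfolding h_def using first_cover_less[OF assms(1)] by simp
  define g where "g w = C * w + 1" for w
  have "back_weight m \<le> sum g ({1, h} \<union> Suc ` back_lags (h - 1))"
    unfolding back_weight_def g_def h_def
    by (intro sum_mono2 back_lags_rec assms) (auto simp: finite_back_lags)
  also have "\<dots> \<le> sum g {1, h} + sum g (Suc ` back_lags (h - 1))"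
    by (subst sum_Un_nat) (auto simp: finite_back_lags)
  also have "sum g {1, h} \<le> g 1 + g h"
    by (cases "h = 1") (auto simp: g_def)
  also have "sum g (Suc ` back_lags (h - 1)) = (\<Sum>w\<in>back_lags (h - 1). g w + C)"
    by (simp add: sum.reindex g_def algebra_simps)
  also have "\<dots> = back_weight (h - 1) + C * card (back_lags (h - 1))"
    unfolding sum.distrib by (simp add: back_weight_def g_def)
  finally have "back_weight m \<le> g 1 + g h + back_weight (h - 1) + C * card (back_lags (h - 1))"
    by simp
  moreover have "card (back_lags (h - 1)) \<le> h - 1"
    using card_mono[OF _ back_lags_subset, of "h - 1"] by simp
  then have "C * card (back_lags (h - 1)) \<le> C * (h - 1)" by simp
  moreover have "C * (h - 1) + C = C * h" using \<open>1 \<le> h\<close> by (cases h) auto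
  ultimately show ?thesis unfolding g_def by linarith
qed

definition cover_chain :: "nat \<Rightarrow> nat \<Rightarrow> nat" where
  "cover_chain n r = (first_cover ^^ r) n"

lemma cover_chain_0 [simp]: "cover_chain n 0 = n"
  and cover_chain_Suc [simp]: "cover_chain n (Suc r) = first_cover (cover_chain n r)"
  by (simp_all add: cover_chain_def)

lemma cover_chain_ge_1: "1 \<le> n \<Longrightarrow> 1 \<le> cover_chain n r"
  using first_cover_ge_1 by (cases r) auto

lemma first_cover_le_self: "1 \<le> u \<Longrightarrow> first_cover u \<le> u"
  using first_cover_le_max[of u] by linarith

lemma decseq_cover_chain: "1 \<le> n \<Longrightarrow> decseq (cover_chain n)"
  unfolding decseq_Suc_iff
  using first_cover_le_self cover_chain_ge_1 by simp

lemma cover_chain_le: "cover_chain n r \<le> max 1 (n - r)"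
proof (induction r)
  case (Suc r)
  then show ?case using first_cover_le_max[of "cover_chain n r"] by auto
qed simp

lemma cover_chain_cut:
  assumes "q < n"
  obtains R where "q * cover_chain n R \<le> n" "\<forall>r<R. 2 \<le> cover_chain n r"
proof
  have "q * cover_chain n n \<le> n"
    using cover_chain_le[of n n] assms by (simp add: order_trans[OF mult_le_mono2[of _ 1]])
  then show "q * cover_chain n (LEAST R. q * cover_chain n R \<le> n) \<le> n"
    by (rule LeastI)
  show "\<forall>r<(LEAST R. q * cover_chain n R \<le> n). 2 \<le> cover_chain n r"
  proof (intro allI impI)
    fix r assume "r < (LEAST R. q * cover_chain n R \<le> n)"
    then have "n < q * cover_chain n r" using not_less_Least by fastforce
    show "2 \<le> cover_chain n r"
    proof (rule ccontr)
      assume "\<not> 2 \<le> cover_chain n r"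
      then have "q * cover_chain n r \<le> q" by simp
      with \<open>n < q * cover_chain n r\<close> assms show False by simp
    qed
  qed
qed

lemma cover_total_chain:
  assumes "\<forall>r<R. 2 \<le> cover_chain n r"
  shows "cover_total n \<le> cover_total (cover_chain n R)
    + (\<Sum>r<R. cover_total (cover_chain n r - cover_chain n (Suc r))
        + 2 * (cover_chain n r - cover_chain n (Suc r)) + back_weight (cover_chain n (Suc r)))"
  using assms
proof (induction R)
  case (Suc R)
  then show ?case using cover_total_split[of "cover_chain n R"] by simp
qed simp

lemma neg_log_lt_card_covered:
  assumes "1 \<le> i"
  shows "- log 2 (e i) < 1 + card {u. i < u \<and> u \<le> (C + 1) * i \<and> covers i u}"
proof -
  define a where "a = - log 2 (e i)"
  have "0 < e i" using e_pos assms .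
  have "2 powr (- real (C * i)) = 1 / 2 ^ (C * i)"
    by (simp add: powr_minus_divide powr_realpow del: of_nat_mult)
  then have "2 powr (- real (C * i)) \<le> e i"
    using exp_lower_bound assms by simp
  then have "- real (C * i) \<le> log 2 (e i)" using le_log_iff[OF _ \<open>0 < e i\<close>] by simp
  then have "a \<le> C * i" by (simp add: a_def)
  have "0 \<le> a" using le_half[of i] \<open>0 < e i\<close> by (simp add: a_def)
  define J where "J = nat \<lfloor>a\<rfloor>"
  have "real J \<le> a" "a < real J + 1" unfolding J_def using \<open>0 \<le> a\<close> by linarith+
  then have "real J \<le> real (C * i)" using \<open>a \<le> C * i\<close> by linarith
  then have "J \<le> C * i" by (simp only: of_nat_le_iff)
  have "{i + 1..i + J} \<subseteq> {u. i < u \<and> u \<le> (C + 1) * i \<and> covers i u}"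
  proof
    fix u assume u: "u \<in> {i + 1..i + J}"
    then have "log 2 (e i) \<le> - real (u - i)" using \<open>real J \<le> a\<close> by (auto simp: a_def)
    then have "e i \<le> 1 / 2 ^ (u - i)"
      using \<open>0 < e i\<close> by (simp add: log_le_iff powr_minus_divide powr_realpow)
    moreover have "u \<le> (C + 1) * i" using u \<open>J \<le> C * i\<close> by simp
    ultimately show "u \<in> {u. i < u \<and> u \<le> (C + 1) * i \<and> covers i u}"
      using u by (simp add: covers_def)
  qed
  moreover have "finite {u. i < u \<and> u \<le> (C + 1) * i \<and> covers i u}" by simp
  ultimately have "card {i + 1..i + J} \<le> card {u. i < u \<and> u \<le> (C + 1) * i \<and> covers i u}"
    by (intro card_mono)
  then have "J \<le> card {u. i < u \<and> u \<le> (C + 1) * i \<and> covers i u}" by simp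
  then show ?thesis using \<open>a < real J + 1\<close> unfolding a_def by linarith
qed

lemma sum_neg_log_le_cover_total:
  "(\<Sum>i=1..n. - log 2 (e i)) \<le> n + cover_total ((C + 1) * n)"
proof -
  define M where "M = (C + 1) * n"
  define A where "A i = {u. i < u \<and> u \<le> (C + 1) * i \<and> covers i u}" for i
  have "(\<Sum>i=1..n. - log 2 (e i)) \<le> (\<Sum>i=1..n. 1 + real (card (A i)))"
    using neg_log_lt_card_covered by (intro sum_mono) (auto simp: A_def less_imp_le)
  also have "\<dots> = n + card (SIGMA i:{1..n}. A i)"
    by (simp add: sum.distrib A_def)
  also have "card (SIGMA i:{1..n}. A i) \<le> cover_total M"
    unfolding cover_total_eq_card
  proof (rule card_inj_on_le[where f = "\<lambda>(i, u). (u, i)"])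
    show "(\<lambda>(i, u). (u, i)) ` (SIGMA i:{1..n}. A i)
        \<subseteq> (SIGMA u:{..M}. {t. 1 \<le> t \<and> t < u \<and> covers t u})"
    proof (rule image_subsetI)
      fix p assume "p \<in> (SIGMA i:{1..n}. A i)"
      then obtain i u where "p = (i, u)" "1 \<le> i" "i \<le> n" "i < u" "u \<le> (C + 1) * i" "covers i u"
        by (auto simp: A_def)
      moreover have "(C + 1) * i \<le> M" unfolding M_def using \<open>i \<le> n\<close> by (rule mult_le_mono2)
      ultimately show "(\<lambda>(i, u). (u, i)) p \<in> (SIGMA u:{..M}. {t. 1 \<le> t \<and> t < u \<and> covers t u})"
        by auto
    qed
  qed (auto simp: inj_on_def)
  finally show ?thesis unfolding M_def by simp
qed

end

section \<open>Linear growth of the number of covering pairs\<close>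

lemma many_short_parts:
  fixes \<delta> :: "nat \<Rightarrow> nat"
  assumes "(\<Sum>r<R. \<delta> r) \<le> n" "n < q * (R + 1)" "4 * q \<le> n"
  shows "n \<le> 4 * q * card {r \<in> {..<R}. \<delta> r < 2 * q}"
proof -
  define short where "short = {r \<in> {..<R}. \<delta> r < 2 * q}"
  define long where "long = {r \<in> {..<R}. \<not> \<delta> r < 2 * q}"
  have "card short + card long = R"
  proof -
    have "{..<R} = short \<union> long" "short \<inter> long = {}" unfolding short_def long_def by auto
    then show ?thesis by (metis card_Un_disjoint card_lessThan finite_Un finite_lessThan)
  qed
  then have partition: "q * card short + q * card long = q * R" by (metis add_mult_distrib2)
  have "2 * q * card long = (\<Sum>r\<in>long. 2 * q)" by simp
  also have "\<dots> \<le> (\<Sum>r\<in>long. \<delta> r)" by (intro sum_mono) (simp add: long_def)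
  also have "\<dots> \<le> (\<Sum>r<R. \<delta> r)" by (intro sum_mono2) (auto simp: long_def)
  finally have "2 * (q * card long) \<le> n" using assms(1) by simp
  then show ?thesis using partition assms(2,3) unfolding short_def by simp
qed

lemma sum_le_saving_short_parts:
  fixes W \<delta> :: "nat \<Rightarrow> nat"
  assumes quadratic: "\<And>n. W n \<le> (n + 1) * n" and parts: "\<forall>r<R. 1 \<le> \<delta> r"
    and long_parts: "\<And>r. r < R \<Longrightarrow> 2 * q \<le> \<delta> r \<Longrightarrow> W (\<delta> r) \<le> K * \<delta> r"
    and "2 * q \<le> K"
  shows "(\<Sum>r<R. W (\<delta> r)) + (K - 2 * q) * card {r \<in> {..<R}. \<delta> r < 2 * q} \<le> K * (\<Sum>r<R. \<delta> r)"
proof -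
  have part_le: "W (\<delta> r) + (K - 2 * q) * (if \<delta> r < 2 * q then 1 else 0) \<le> K * \<delta> r"
    if "r < R" for r
  proof (cases "\<delta> r < 2 * q")
    case True
    have "W (\<delta> r) \<le> 2 * q * \<delta> r"
      using quadratic[of "\<delta> r"] True mult_le_mono1[of "\<delta> r + 1" "2 * q" "\<delta> r"] by linarith
    moreover have "K - 2 * q \<le> (K - 2 * q) * \<delta> r" using parts that by simp
    moreover have "2 * q * \<delta> r + (K - 2 * q) * \<delta> r = K * \<delta> r"
      using \<open>2 * q \<le> K\<close> by (simp flip: add_mult_distrib)
    ultimately show ?thesis by (simp only: if_P[OF True] mult_1_right)
  next
    case False
    then show ?thesis using long_parts that by simp
  qed
  have "(\<Sum>r<R. W (\<delta> r)) + (K - 2 * q) * card {r \<in> {..<R}. \<delta> r < 2 * q}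
      = (\<Sum>r<R. W (\<delta> r) + (K - 2 * q) * (if \<delta> r < 2 * q then 1 else 0))"
    by (simp add: sum.distrib flip: sum_distrib_left sum.inter_filter)
  also have "\<dots> \<le> (\<Sum>r<R. K * \<delta> r)" by (intro sum_mono part_le) simp
  finally show ?thesis by (simp add: sum_distrib_left)
qed

definition many_part_split :: "(nat \<Rightarrow> nat) \<Rightarrow> nat \<Rightarrow> nat \<Rightarrow> nat \<Rightarrow> bool" where
  "many_part_split W q X n \<longleftrightarrow> (\<exists>a R \<delta>. 0 < a \<and> a + (\<Sum>r<R. \<delta> r) = n \<and> (\<forall>r<R. 1 \<le> \<delta> r)
     \<and> n < q * (R + 1) \<and> W n \<le> W a + (\<Sum>r<R. W (\<delta> r)) + X * n)"

text \<open>Parts shorter than \<open>2 q\<close> have \<open>W \<delta> \<le> 2 q \<delta>\<close> instead of \<open>K \<delta>\<close>; since the number of parts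
  exceeds \<open>n / q - 1\<close>, at least \<open>n / (4 q)\<close> of them are short, and this saving pays for
  the overhead \<open>X n\<close>.\<close>

lemma linear_bound_if_many_part_splits:
  fixes W :: "nat \<Rightarrow> nat"
  assumes quadratic: "\<And>n. W n \<le> (n + 1) * n" and splits: "\<And>n. M \<le> n \<Longrightarrow> many_part_split W q X n"
  shows "\<exists>K. \<forall>n. W n \<le> K * n"
proof -
  define K where "K = M + 4 * q + 2 * q + 4 * q * X"
  have "W n \<le> K * n" for n
  proof (induction n rule: less_induct)
    case (less n)
    show ?case
    proof (cases "M + 4 * q \<le> n")
      case False
      then have "(n + 1) * n \<le> K * n" unfolding K_def by (intro mult_le_mono1) linarith
      then show ?thesis using quadratic order_trans by blast
    next
      case True
      then obtain a R \<delta> where a: "0 < a" and sum: "a + (\<Sum>r<R. \<delta> r) = n"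
        and parts: "\<forall>r<R. 1 \<le> \<delta> r" and many: "n < q * (R + 1)"
        and W_n: "W n \<le> W a + (\<Sum>r<R. W (\<delta> r)) + X * n"
        using splits[of n] unfolding many_part_split_def by auto
      define S where "S = card {r \<in> {..<R}. \<delta> r < 2 * q}"
      have "\<delta> r < n" if "r < R" for r
        using member_le_sum[of r "{..<R}" \<delta>] that a sum by simp
      moreover have "2 * q \<le> K" unfolding K_def by simp
      ultimately have "(\<Sum>r<R. W (\<delta> r)) + (K - 2 * q) * S \<le> K * (\<Sum>r<R. \<delta> r)"
        unfolding S_def using less.IH by (intro sum_le_saving_short_parts[OF quadratic parts]) simp_all
      moreover have "W a \<le> K * a"
      proof (rule less.IH)
        have "R \<noteq> 0" using many True by (cases R) auto
        then show "a < n" using member_le_sum[of 0 "{..<R}" \<delta>] parts sum by force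
      qed
      moreover have "X * n \<le> (K - 2 * q) * S"
      proof -
        have "n \<le> 4 * q * S" unfolding S_def using sum many True by (intro many_short_parts) auto
        then have "X * n \<le> 4 * q * X * S" by (simp add: algebra_simps)
        also have "\<dots> \<le> (K - 2 * q) * S" unfolding K_def by (intro mult_le_mono1) simp
        finally show ?thesis .
      qed
      moreover have "K * a + K * (\<Sum>r<R. \<delta> r) = K * n" using sum by (simp flip: add_mult_distrib2)
      ultimately show ?thesis using W_n by linarith
    qed
  qed
  then show ?thesis by blast
qed

text \<open>The hypothesis \<open>long\<close> is what \<open>x \<notin> Z(\<epsilon>)\<close> provides for \<open>q \<ge> 1/\<epsilon>\<close>: a chain from \<open>n \<ge> N\<close>
  that drops to \<open>n / q\<close> within at most \<open>n / q - 1\<close> steps would yield an element of \<open>F\<^sup>n\<^sup>,\<^sup>1(\<epsilon>)\<close>.\<close>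

locale long_chains = return_profile +
  fixes q N :: nat
  assumes q_pos: "1 \<le> q"
    and long: "N \<le> n \<Longrightarrow> \<forall>r<R. 2 \<le> cover_chain n r \<Longrightarrow> q * cover_chain n R \<le> n \<Longrightarrow> n < q * (R + 1)"
begin

lemma first_cover_large:
  assumes "N \<le> m" "2 * q \<le> m"
  shows "m < q * first_cover m"
proof (rule ccontr)
  assume "\<not> m < q * first_cover m"
  then have "m < q * 2"
    using long[of m 1] assms q_pos by simp
  then show False using assms(2) by simp
qed

lemma back_weight_linear: "\<exists>D. \<forall>m. back_weight m \<le> D * m"
proof -
  define M where "M = max N (2 * q)"
  define D where "D = 2 * C * q + 2 + C * M + 1"
  have "back_weight m \<le> D * m" for m
  proof (induction m rule: less_induct)
    case (less m)
    consider "m < M" | "2 \<le> m" "M \<le> m"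
      using q_pos unfolding M_def by linarith
    then show ?case
    proof cases
      case 1
      have "back_weight m \<le> m * (C * m + 1)" by (rule back_weight_le)
      also have "\<dots> \<le> m * (C * M + 1)" using 1 by simp
      also have "\<dots> \<le> D * m" unfolding D_def by (subst mult.commute) (intro mult_le_mono1, simp)
      finally show ?thesis .
    next
      case 2
      define g where "g = first_cover m"
      define h where "h = m - g"
      have "1 \<le> g" "g < m" unfolding g_def using first_cover_ge_1 first_cover_less 2 by auto
      have "m < q * g" unfolding g_def using first_cover_large 2 unfolding M_def by simp
      have "back_weight m \<le> back_weight (h - 1) + 2 * C * h + 2"
        unfolding h_def g_def using back_weight_rec 2 by simp
      moreover have "back_weight (h - 1) \<le> D * (h - 1)"
        using less.IH \<open>1 \<le> g\<close> \<open>g < m\<close> unfolding h_def by simp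
      moreover have "2 * C * h \<le> D * g"
      proof -
        have "h \<le> q * g" using \<open>m < q * g\<close> unfolding h_def by simp
        then have "2 * C * h \<le> 2 * C * (q * g)" by (rule mult_le_mono2)
        also have "\<dots> \<le> D * g" unfolding D_def by (simp add: algebra_simps)
        finally show ?thesis .
      qed
      moreover have "D * (h - 1) + D = D * h" using \<open>g < m\<close> unfolding h_def by (cases "m - g") auto
      moreover have "D * m = D * h + D * g" using \<open>g < m\<close> unfolding h_def by (simp flip: add_mult_distrib2)
      moreover have "2 \<le> D" unfolding D_def by simp
      ultimately show ?thesis by linarith
    qed
  qed
  then show ?thesis by blast
qed

lemma back_weight_le_gap: "\<exists>D. \<forall>m\<ge>1. back_weight m \<le> D * (m - first_cover m) + 2"
proof -
  obtain D where D: "\<And>m. back_weight m \<le> D * m" using back_weight_linear by blast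
  have "back_weight m \<le> (D + 2 * C) * (m - first_cover m) + 2" if "1 \<le> m" for m
  proof (cases "m = 1")
    case True
    then show ?thesis using back_lags_subset[of 1] by (simp add: back_weight_def)
  next
    case False
    with that have "back_weight m \<le> back_weight (m - first_cover m - 1) + 2 * C * (m - first_cover m) + 2"
      using back_weight_rec by simp
    also have "back_weight (m - first_cover m - 1) \<le> D * (m - first_cover m)"
      using D[of "m - first_cover m - 1"] mult_le_mono2[of "m - first_cover m - 1" "m - first_cover m" D]
      by linarith
    finally show ?thesis by (simp add: algebra_simps)
  qed
  then show ?thesis by blast
qed

lemma sum_back_weight_chain:
  obtains D where "\<And>n R. 1 \<le> n \<Longrightarrow> (\<Sum>r<R. back_weight (cover_chain n (Suc r))) \<le> D * n + 2 * R"
proof -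
  obtain D where D: "\<And>m. 1 \<le> m \<Longrightarrow> back_weight m \<le> D * (m - first_cover m) + 2"
    using back_weight_le_gap by blast
  have "(\<Sum>r<R. back_weight (cover_chain n (Suc r))) \<le> D * n + 2 * R" if "1 \<le> n" for n R
  proof -
    have dec: "decseq (cover_chain n)" using that by (rule decseq_cover_chain)
    have "(\<Sum>r<R. back_weight (cover_chain n (Suc r)))
        \<le> (\<Sum>r<R. D * (cover_chain n (Suc r) - cover_chain n (Suc (Suc r))) + 2)"
      unfolding cover_chain_Suc by (intro sum_mono D[OF first_cover_ge_1])
    also have "\<dots> = D * (\<Sum>r<R. cover_chain n (Suc r) - cover_chain n (Suc (Suc r))) + 2 * R"
      by (simp only: sum.distrib flip: sum_distrib_left) simp
    also have "(\<Sum>r<R. cover_chain n (Suc r) - cover_chain n (Suc (Suc r)))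
        = cover_chain n 1 - cover_chain n (Suc R)"
      by (subst sum_lessThan_telescope_nat) (auto intro!: decseqD[OF dec] simp del: cover_chain_Suc)
    also have "\<dots> \<le> n" using decseqD[OF dec, of 0 1] by simp
    finally show ?thesis by simp
  qed
  then show ?thesis using that by blast
qed

lemma cover_total_many_part_split:
  obtains X where "\<And>n. N + q + 1 \<le> n \<Longrightarrow> many_part_split cover_total q X n"
proof -
  obtain D where D: "\<And>n R. 1 \<le> n \<Longrightarrow> (\<Sum>r<R. back_weight (cover_chain n (Suc r))) \<le> D * n + 2 * R"
    using sum_back_weight_chain by blast
  have "many_part_split cover_total q (D + 4) n" if "N + q + 1 \<le> n" for n
  proof -
    have "q < n" using that by simp
    then obtain R where cut: "q * cover_chain n R \<le> n" and steps: "\<forall>r<R. 2 \<le> cover_chain n r"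
      by (rule cover_chain_cut)
    define \<delta> where "\<delta> r = cover_chain n r - cover_chain n (Suc r)" for r
    have dec: "decseq (cover_chain n)" using that by (intro decseq_cover_chain) simp
    have sum: "cover_chain n R + (\<Sum>r<R. \<delta> r) = n"
      using decseqD[OF dec, of 0 R] unfolding \<delta>_def
      by (subst sum_lessThan_telescope_nat) (auto intro!: decseqD[OF dec] simp del: cover_chain_Suc)
    have parts: "\<forall>r<R. 1 \<le> \<delta> r"
      using steps first_cover_less unfolding \<delta>_def by (simp add: Suc_leI)
    then have "R \<le> (\<Sum>r<R. \<delta> r)"
      using sum_mono[of "{..<R}" "\<lambda>_. 1" \<delta>] by simp
    have "cover_total n \<le> cover_total (cover_chain n R)
        + (\<Sum>r<R. cover_total (\<delta> r) + 2 * \<delta> r + back_weight (cover_chain n (Suc r)))"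
      using cover_total_chain[OF steps] unfolding \<delta>_def .
    also have "\<dots> = cover_total (cover_chain n R) + (\<Sum>r<R. cover_total (\<delta> r))
        + 2 * (\<Sum>r<R. \<delta> r) + (\<Sum>r<R. back_weight (cover_chain n (Suc r)))"
      by (simp add: sum.distrib sum_distrib_left)
    also have "\<dots> \<le> cover_total (cover_chain n R) + (\<Sum>r<R. cover_total (\<delta> r)) + (D + 4) * n"
      using D[of n R] sum \<open>R \<le> (\<Sum>r<R. \<delta> r)\<close> that
      by (simp add: algebra_simps del: cover_chain_Suc)
    finally show ?thesis
      unfolding many_part_split_def using sum parts long[OF _ steps cut] cover_chain_ge_1[of n R] that
      by (intro exI[of _ "cover_chain n R"] exI[of _ R] exI[of _ \<delta>]) simp
  qed
  then show ?thesis using that by blast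
qed

lemma cover_total_linear: "\<exists>K. \<forall>n. cover_total n \<le> K * n"
proof -
  obtain X where "\<And>n. N + q + 1 \<le> n \<Longrightarrow> many_part_split cover_total q X n"
    using cover_total_many_part_split by blast
  then show ?thesis by (rule linear_bound_if_many_part_splits[OF cover_total_le])
qed

lemma sum_neg_log_linear: "\<exists>L. \<forall>n. (\<Sum>i=1..n. - log 2 (e i)) \<le> L * real n"
proof -
  obtain K where K: "\<And>n. cover_total n \<le> K * n" using cover_total_linear by blast
  have "(\<Sum>i=1..n. - log 2 (e i)) \<le> real (1 + K * (C + 1)) * real n" for n
  proof -
    have "real (cover_total ((C + 1) * n)) \<le> real (K * ((C + 1) * n))"
      using K of_nat_le_iff by blast
    then show ?thesis
      using sum_neg_log_le_cover_total[of n] by (simp add: algebra_simps)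
  qed
  then show ?thesis by blast
qed

end

section \<open>Return distances of the doubling map\<close>

definition return_dist :: "real \<Rightarrow> nat \<Rightarrow> real" where
  "return_dist x t = tdist ((dbl ^^ t) x) x"

lemma return_dist_shift_le:
  "\<bar>return_dist x (i + s) - return_dist x s\<bar> \<le> 2 ^ s * return_dist x i"
proof -
  define y where "y = (dbl ^^ i) x"
  have shift: "(dbl ^^ (i + s)) x = (dbl ^^ s) y"
    unfolding y_def add.commute[of i s] funpow_add by simp
  have "tdist ((dbl ^^ s) y) ((dbl ^^ s) x) \<le> 2 ^ s * tdist y x"
    by (rule tdist_funpow_dbl_le)
  moreover have "tdist ((dbl ^^ s) y) x \<le> tdist ((dbl ^^ s) y) ((dbl ^^ s) x) + tdist ((dbl ^^ s) x) x"
    and "tdist ((dbl ^^ s) x) x \<le> tdist ((dbl ^^ s) x) ((dbl ^^ s) y) + tdist ((dbl ^^ s) y) x"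
    by (rule tdist_triangle)+
  moreover have "tdist ((dbl ^^ s) x) ((dbl ^^ s) y) = tdist ((dbl ^^ s) y) ((dbl ^^ s) x)"
    by (rule tdist_commute)
  ultimately show ?thesis
    unfolding return_dist_def shift y_def[symmetric] by (simp add: abs_le_iff)
qed

lemma return_dist_mult_eq_0:
  assumes "x \<in> torus" "1 \<le> p" "return_dist x p = 0"
  shows "return_dist x (p * k) = 0"
proof -
  have "(dbl ^^ p) x \<in> torus"
    using assms(2) dbl_in_torus by (cases p) auto
  then have fix_p: "(dbl ^^ p) x = x"
    using tdist_eq_0_imp_eq assms(1,3) unfolding return_dist_def by blast
  have "((dbl ^^ p) ^^ k) x = x" by (induction k) (simp_all add: fix_p)
  then show ?thesis unfolding return_dist_def by (simp add: funpow_mult tdist_def)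
qed

lemma eventually_exp_lower_bound_if_not_Y_inf:
  assumes "x \<in> torus" "x \<notin> Y_inf"
  obtains C0 n0 :: nat where "\<And>n. n0 \<le> n \<Longrightarrow> 0 < return_dist x n \<and> 1 / 2 ^ (C0 * n) \<le> return_dist x n"
proof -
  define G where "G n = ereal (1 / real n) * elog2 (return_dist x n)" for n
  have "-\<infinity> < liminf G" using assms unfolding Y_inf_def G_def return_dist_def by auto
  then obtain y where "ereal y < liminf G" using ereal_dense2 by blast
  then obtain n0 where n0: "\<And>n. n0 \<le> n \<Longrightarrow> ereal y < G n"
    using less_LiminfD[of y sequentially G] by (auto simp: eventually_sequentially)
  define C0 where "C0 = nat \<lceil>- y\<rceil>"
  have "0 < return_dist x n \<and> 1 / 2 ^ (C0 * n) \<le> return_dist x n" if "Suc n0 \<le> n" for n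
  proof -
    have "1 \<le> real n" using that by simp
    have "return_dist x n \<noteq> 0" using n0[of n] that by (auto simp: G_def elog2_def)
    then have pos: "0 < return_dist x n"
      using tdist_nonneg[of "(dbl ^^ n) x" x] unfolding return_dist_def by linarith
    then have "y < log 2 (return_dist x n) / real n"
      using n0[of n] that by (simp add: G_def elog2_def)
    then have "y * real n < log 2 (return_dist x n)"
      using \<open>1 \<le> real n\<close> by (simp add: less_divide_eq)
    moreover have "- real C0 * real n \<le> y * real n"
      using \<open>1 \<le> real n\<close> unfolding C0_def by (intro mult_right_mono) linarith+
    ultimately have "- real (C0 * n) \<le> log 2 (return_dist x n)" by simp
    then have "2 powr (- real (C0 * n)) \<le> return_dist x n" using le_log_iff[OF _ pos] by simp
    then show ?thesis
      using pos by (simp add: powr_minus_divide powr_realpow del: of_nat_mult)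
  qed
  then show ?thesis using that by blast
qed

lemma exp_lower_bound_if_eventually:
  fixes e :: "nat \<Rightarrow> real"
  assumes pos: "\<And>w. 1 \<le> w \<Longrightarrow> 0 < e w"
    and eventually: "\<And>n. n0 \<le> n \<Longrightarrow> 1 / 2 ^ (C0 * n) \<le> e n"
  shows "\<exists>C. \<forall>w\<ge>1. 1 / 2 ^ (C * w) \<le> e w"
proof -
  have "\<forall>\<^sub>F k in sequentially. \<forall>w\<in>{1..<n0}. (1 / 2) ^ k < e w"
    by (rule eventually_ball_finite) (use pos in \<open>auto intro: order_tendstoD(2)[OF LIMSEQ_power_zero]\<close>)
  then obtain k where k: "\<And>w. w \<in> {1..<n0} \<Longrightarrow> (1 / 2) ^ k < e w"
    unfolding eventually_sequentially by blast
  have "1 / 2 ^ ((C0 + k) * w) \<le> e w" if "1 \<le> w" for w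
  proof (cases "n0 \<le> w")
    case True
    have "1 / 2 ^ ((C0 + k) * w) \<le> (1::real) / 2 ^ (C0 * w)"
      by (simp add: frac_le power_increasing)
    then show ?thesis using eventually[OF True] by linarith
  next
    case False
    have "k \<le> (C0 + k) * w" using that mult_le_mono[of k "C0 + k" 1 w] by simp
    then have "1 / 2 ^ ((C0 + k) * w) \<le> (1::real) / 2 ^ k"
      by (intro divide_left_mono power_increasing) auto
    then show ?thesis using k[of w] that False by (simp add: power_one_over)
  qed
  then show ?thesis by blast
qed

lemma return_profile_if_not_Y_inf:
  assumes "x \<in> torus" "x \<notin> Y_inf"
  shows "\<exists>C. return_profile (return_dist x) C"
proof -
  obtain C0 n0 where C0: "\<And>n. n0 \<le> n \<Longrightarrow> 0 < return_dist x n \<and> 1 / 2 ^ (C0 * n) \<le> return_dist x n"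
    using eventually_exp_lower_bound_if_not_Y_inf[OF assms] by blast
  have "0 < return_dist x w" if "1 \<le> w" for w
  proof (rule ccontr)
    assume "\<not> 0 < return_dist x w"
    then have "return_dist x w = 0" using tdist_nonneg unfolding return_dist_def by (simp add: not_less order_antisym)
    then have "return_dist x (w * n0) = 0" using return_dist_mult_eq_0 assms(1) that by blast
    moreover have "n0 \<le> w * n0" using that by simp
    ultimately show False using C0 by fastforce
  qed
  then obtain C where C: "\<forall>w\<ge>1. 1 / 2 ^ (C * w) \<le> return_dist x w"
    using exp_lower_bound_if_eventually[of "return_dist x" n0 C0] C0 by blast
  have "return_profile (return_dist x) C"
  proof
    show "return_dist x t \<le> 1 / 2" for t
      unfolding return_dist_def by (rule tdist_le_half)
    show "\<bar>return_dist x (i + s) - return_dist x s\<bar> \<le> 2 ^ s * return_dist x i" for i s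
      by (rule return_dist_shift_le)
    show "1 \<le> w \<Longrightarrow> 1 / 2 ^ (C * w) \<le> return_dist x w" for w
      using C by blast
  qed
  then show ?thesis by blast
qed

lemma not_X_inf_if_sum_neg_log_linear:
  assumes pos: "\<And>i. 1 \<le> i \<Longrightarrow> 0 < return_dist x i"
    and linear: "\<And>n. (\<Sum>i=1..n. - log 2 (return_dist x i)) \<le> L * real n"
  shows "x \<notin> X_inf"
proof
  assume "x \<in> X_inf"
  define G where "G n = ereal (1 / real n) * (\<Sum>i=1..n. elog2 (return_dist x i))" for n
  have "liminf G = -\<infinity>" using \<open>x \<in> X_inf\<close> unfolding X_inf_def G_def return_dist_def by auto
  moreover have "ereal (- L) \<le> G n" if "1 \<le> n" for n
  proof -
    have "(\<Sum>i=1..n. elog2 (return_dist x i)) = (\<Sum>i=1..n. ereal (log 2 (return_dist x i)))"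
    proof (rule sum.cong)
      show "elog2 (return_dist x i) = ereal (log 2 (return_dist x i))" if "i \<in> {1..n}" for i
        using pos[of i] that by (simp add: elog2_def)
    qed simp
    then have "(\<Sum>i=1..n. elog2 (return_dist x i)) = ereal (\<Sum>i=1..n. log 2 (return_dist x i))"
      by simp
    moreover have "- L \<le> (\<Sum>i=1..n. log 2 (return_dist x i)) / real n"
      using linear[of n] that by (simp add: le_divide_eq sum_negf)
    ultimately show ?thesis by (simp add: G_def)
  qed
  then have "ereal (- L) \<le> liminf G"
    by (intro Liminf_bounded) (auto simp: eventually_sequentially)
  ultimately show False by simp
qed

section \<open>Chains as elements of F\<close>

lemma Q_subset_Qhat: "Q i j \<subseteq> Qhat i j"
proof
  fix x assume x: "x \<in> Q i j"
  then have "0 \<le> x" "x < 1" unfolding Q_def torus_def by auto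
  define m where "m = nat \<lfloor>x * 2 ^ (i + j)\<rfloor>"
  have m: "real m = of_int \<lfloor>x * 2 ^ (i + j)\<rfloor>" unfolding m_def using \<open>0 \<le> x\<close> by simp
  have "x \<in> dyadic (i + j) m"
    unfolding dyadic_def using m by (simp add: field_simps) linarith
  moreover have "m < 2 ^ (i + j)"
  proof -
    have "real m < 2 ^ (i + j)" using m \<open>x < 1\<close> by (simp add: floor_less_iff)
    then show ?thesis by (metis of_nat_less_iff of_nat_numeral of_nat_power)
  qed
  ultimately show "x \<in> Qhat i j" unfolding Qhat_def using x by blast
qed

lemma Qhat_multi_if_Q:
  assumes "x \<in> torus" "\<And>\<nu>. \<nu> < length is \<Longrightarrow> x \<in> Q (is ! \<nu>) (js ! \<nu>)"
  shows "x \<in> Qhat_multi is js"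
  unfolding Qhat_multi_def using assms Q_subset_Qhat by blast

lemma of_nat_le_eps_mult:
  assumes "1 \<le> q" "1 / real q \<le> eps" "q * k \<le> n"
  shows "real k \<le> eps * real n"
proof -
  have "real k \<le> real n / real q"
    using assms(1,3) by (simp add: le_divide_eq mult.commute flip: of_nat_mult)
  also have "\<dots> = 1 / real q * real n" by simp
  also have "\<dots> \<le> eps * real n" using assms(2) by (intro mult_right_mono) auto
  finally show ?thesis .
qed

text \<open>For a chain \<open>g 0 > \<dots> > g R\<close> the paper's indices \<open>i\<^sub>1 < \<dots> < i\<^sub>k\<close> run through the chain
  backwards, \<open>j\<^sub>l\<close> is the gap \<open>i\<^sub>l\<^sub>+\<^sub>1 - i\<^sub>l\<close>, and \<open>j\<^sub>k = m\<close>.\<close>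

definition chain_starts :: "(nat \<Rightarrow> nat) \<Rightarrow> nat \<Rightarrow> nat list" where
  "chain_starts g R = map (\<lambda>l. g (R - l)) [0..<Suc R]"

definition chain_gaps :: "(nat \<Rightarrow> nat) \<Rightarrow> nat \<Rightarrow> nat \<Rightarrow> nat list" where
  "chain_gaps g R m = map (\<lambda>l. if l < R then g (R - l - 1) - g (R - l) else m) [0..<Suc R]"

lemma length_chain_starts [simp]: "length (chain_starts g R) = Suc R"
  and length_chain_gaps [simp]: "length (chain_gaps g R m) = Suc R"
  by (simp_all add: chain_starts_def chain_gaps_def)

lemma nth_chain_starts [simp]: "l < Suc R \<Longrightarrow> chain_starts g R ! l = g (R - l)"
  and nth_chain_gaps [simp]:
    "l < Suc R \<Longrightarrow> chain_gaps g R m ! l = (if l < R then g (R - l - 1) - g (R - l) else m)"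
  by (simp_all add: chain_starts_def chain_gaps_def del: upt_Suc)

lemma sum_chain_gaps:
  assumes "\<And>r. r < R \<Longrightarrow> g (Suc r) \<le> g r"
  shows "(\<Sum>l<R. chain_gaps g R m ! l) = g 0 - g R"
proof -
  have "(\<Sum>l<R. chain_gaps g R m ! l) = (\<Sum>l<R. g (R - Suc l) - g (Suc (R - Suc l)))"
    by (intro sum.cong) (auto simp: Suc_diff_Suc)
  also have "\<dots> = (\<Sum>r<R. g r - g (Suc r))"
    by (rule sum.nat_diff_reindex[where g = "\<lambda>r. g r - g (Suc r)"])
  also have "\<dots> = g 0 - g R"
    using assms by (rule sum_lessThan_telescope_nat)
  finally show ?thesis .
qed

lemma chain_in_Fnm:
  fixes g :: "nat \<Rightarrow> nat"
  assumes dec: "\<And>r. r < R \<Longrightarrow> g (Suc r) < g r" and "1 \<le> g R" "1 \<le> m"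
    and "real (Suc R) \<le> eps * real (g 0)" "real (g R) \<le> eps * real (g 0)"
  shows "(chain_starts g R, chain_gaps g R m) \<in> Fnm (g 0) m eps"
proof -
  have below: "g R + (R - r) \<le> g r" if "r \<le> R" for r
    using that
  proof (induction r rule: inc_induct)
    case (step r)
    then show ?case using dec[of r] by (simp add: Suc_diff_Suc)
  qed simp
  have gaps: "(\<Sum>l<R. chain_gaps g R m ! l) = g 0 - g R"
    using dec by (intro sum_chain_gaps) (simp add: less_imp_le)
  have "(chain_starts g R, chain_gaps g R m) \<in> F (Suc R) eps"
    unfolding F_def
  proof (simp only: mem_Collect_eq case_prod_conv, intro conjI allI impI)
    show "length (chain_starts g R) = Suc R" "length (chain_gaps g R m) = Suc R" "1 \<le> Suc R"
      by simp_all
    show "1 \<le> chain_starts g R ! l" if "l < Suc R" for l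
      using that \<open>1 \<le> g R\<close> below[of "R - l"] by simp
    show "1 \<le> chain_gaps g R m ! l" if "l < Suc R" for l
      using that dec[of "R - Suc l"] \<open>1 \<le> m\<close> by (cases "l < R") (auto simp: Suc_diff_Suc)
    show "chain_starts g R ! l < chain_starts g R ! (l + 1)" if "l + 1 < Suc R" for l
      using that dec[of "R - Suc l"] by (simp add: Suc_diff_Suc)
    show "chain_gaps g R m ! l \<le> chain_starts g R ! (l + 1) - chain_starts g R ! l"
      if "l + 1 < Suc R" for l
      using that by (simp add: Suc_diff_Suc)
    show "real (Suc R) \<le> eps * real (chain_starts g R ! (Suc R - 1))"
      using assms(4) by simp
    show "real (chain_starts g R ! (Suc R - 1)) - real (\<Sum>l<Suc R - 1. chain_gaps g R m ! l)
        \<le> eps * real (chain_starts g R ! (Suc R - 1))"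
      using gaps assms(5) below[of 0] by (simp add: of_nat_diff del: nth_chain_gaps)
  qed
  then show ?thesis unfolding Fnm_def using assms below[of 0] by (auto intro!: bexI[of _ "Suc R"])
qed

lemma chain_in_Qhat_multi:
  assumes "x \<in> torus" "\<And>r. r < R \<Longrightarrow> x \<in> Q (g (Suc r)) (g r - g (Suc r))"
  shows "x \<in> Qhat_multi (chain_starts g R) (chain_gaps g R 1)"
proof (rule Qhat_multi_if_Q[OF assms(1)])
  fix \<nu> assume "\<nu> < length (chain_starts g R)"
  then have "\<nu> \<le> R" by simp
  show "x \<in> Q (chain_starts g R ! \<nu>) (chain_gaps g R 1 ! \<nu>)"
  proof (cases "\<nu> < R")
    case True
    then have "Suc (R - Suc \<nu>) = R - \<nu>" by (rule Suc_diff_Suc)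
    then show ?thesis using assms(2)[of "R - Suc \<nu>"] True by simp
  next
    case False
    then show ?thesis using assms(1) \<open>\<nu> \<le> R\<close> tdist_le_half by (simp add: Q_def)
  qed
qed

lemma long_chains_if_avoids_Fnm:
  assumes x: "x \<in> torus" and profile: "return_profile (return_dist x) C"
    and q: "1 \<le> q" "1 / real q \<le> eps"
    and avoids: "\<And>n is js. N \<le> n \<Longrightarrow> (is, js) \<in> Fnm n 1 eps \<Longrightarrow> x \<notin> Qhat_multi is js"
  shows "long_chains (return_dist x) C q N"
proof -
  interpret return_profile "return_dist x" C by (rule profile)
  show ?thesis
  proof
    fix n R assume "N \<le> n" and steps: "\<forall>r<R. 2 \<le> cover_chain n r"
      and cut: "q * cover_chain n R \<le> n"
    show "n < q * (R + 1)"
    proof (rule ccontr)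
      assume "\<not> n < q * (R + 1)"
      then have "(chain_starts (cover_chain n) R, chain_gaps (cover_chain n) R 1) \<in> Fnm n 1 eps"
        using chain_in_Fnm[of R "cover_chain n" 1 eps] first_cover_less steps cover_chain_ge_1[of n R]
          of_nat_le_eps_mult[OF q cut] of_nat_le_eps_mult[OF q, of "R + 1" n] q(1)
        by (simp add: Suc_le_eq)
      moreover have "x \<in> Qhat_multi (chain_starts (cover_chain n) R) (chain_gaps (cover_chain n) R 1)"
        using covers_first_cover x
        by (intro chain_in_Qhat_multi) (simp_all add: Q_def covers_def return_dist_def)
      ultimately show False using avoids \<open>N \<le> n\<close> by blast
    qed
  qed (rule q(1))
qed

theorem proposition4p7:
  fixes eps :: real
  assumes "eps > 0"
  shows "X_inf - Y_inf \<subseteq> Z eps"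
proof
  fix x assume x: "x \<in> X_inf - Y_inf"
  then have "x \<in> torus" unfolding X_inf_def by auto
  obtain C where profile: "return_profile (return_dist x) C"
    using return_profile_if_not_Y_inf \<open>x \<in> torus\<close> x by blast
  obtain q :: nat where "0 < q" "inverse (real q) < eps"
    using ex_inverse_of_nat_less[OF assms] by blast
  then have "1 \<le> q" "1 / real q \<le> eps" by (simp_all add: inverse_eq_divide)
  show "x \<in> Z eps"
  proof (rule ccontr)
    assume "x \<notin> Z eps"
    then obtain N where "x \<notin> (\<Union>n\<in>{N..}. \<Union>m\<in>{1..}. \<Union>(is, js)\<in>Fnm n m eps. Qhat_multi is js)"
      unfolding Z_def by blast
    then have "\<And>n is js. N \<le> n \<Longrightarrow> (is, js) \<in> Fnm n 1 eps \<Longrightarrow> x \<notin> Qhat_multi is js"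
      by blast
    then interpret long_chains "return_dist x" C q N
      using long_chains_if_avoids_Fnm[OF \<open>x \<in> torus\<close> profile \<open>1 \<le> q\<close> \<open>1 / real q \<le> eps\<close>] by blast
    obtain L where "\<And>n. (\<Sum>i=1..n. - log 2 (return_dist x i)) \<le> L * real n"
      using sum_neg_log_linear by blast
    then have "x \<notin> X_inf" using not_X_inf_if_sum_neg_log_linear e_pos by blast
    then show False using x by blast
  qed
qed

end
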